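(* Let $\mu$ be the law of a noisy process and $\nu$ the law of a Gaussian noisy process, and fix $n\ge2$. Assume (1) for every $\mathbf x\in\mathbb R^n$, the mean vectors and covariance matrices of $P_{\mathbf x}\mu$ and $P_{\mathbf x}\nu$ exist and all their entries are bounded in absolute value by a constant $M>0$; (2) the noise variances of $\mu$ and $\nu$ are both at least $\sigma^2>0$. Then for every $\mathbf x\in\mathbb R^n$, $$\operatorname{KL}(P_{\mathbf x}\mu,P_{\mathbf x}\nu)\le\frac{4n^2(M\vee1)^2}{\sigma^2}.$$
   Context: A stochastic process $f$ on $\mathbb R$ is noisy with noise variance $\sigma^2>0$ if $f=f^{\mathrm s}+f^{\mathrm n}$ with $f^{\mathrm s},f^{\mathrm n}$ independent, $f^{\mathrm s}$ (smooth part) having continuous sample paths, and $(f^{\mathrm n}(x_1),\dots,f^{\mathrm n}(x_n))\sim\mathcal N(\mathbf 0,\sigma^2\mathbf I_n)$ for pairwise distinct $x_i$; it is a Gaussian noisy process if $f^{\mathrm s}$ is Gaussian. Convention: for a noisy process with law $\mu$ and noise variance $\sigma_\mu^2$, and $\mathbf x\in\mathbb R^n$ (entries possibly repeated), $P_{\mathbf x}\mu$ is the law of $(f^{\mathrm s}(x_1),\dots,f^{\mathrm s}(x_n))+\boldsymbol\varepsilon$ with $\boldsymbol\varepsilon\sim\mathcal N(\mathbf 0,\sigma_\mu^2\mathbf I_n)$ independent of $f^{\mathrm s}$. *)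

theory Defs
  imports "HOL-Probability.Probability"
begin

definition real_gaussian_rv :: "'w measure \<Rightarrow> ('w \<Rightarrow> real) \<Rightarrow> bool" where
  "real_gaussian_rv M X \<longleftrightarrow> X \<in> borel_measurable M \<and>
     (\<exists>m s. distr M borel X = return borel m \<or>
            (s > 0 \<and> distr M borel X = density lborel (normal_density m s)))"

text \<open>Smooth part of a noisy process: a process on a probability space with continuous
  sample paths (each coordinate a random variable).\<close>
definition smooth_process :: "'w measure \<Rightarrow> ('w \<Rightarrow> real \<Rightarrow> real) \<Rightarrow> bool" where
  "smooth_process M fs \<longleftrightarrow> prob_space M \<and>
     (\<forall>t. (\<lambda>\<omega>. fs \<omega> t) \<in> borel_measurable M) \<and>
     (\<forall>\<omega>\<in>space M. continuous_on UNIV (fs \<omega>))"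

definition gaussian_process :: "'w measure \<Rightarrow> ('w \<Rightarrow> real \<Rightarrow> real) \<Rightarrow> bool" where
  "gaussian_process M fs \<longleftrightarrow>
     (\<forall>(T :: real set) (c :: real \<Rightarrow> real). finite T \<longrightarrow>
        real_gaussian_rv M (\<lambda>\<omega>. \<Sum>t\<in>T. c t * fs \<omega> t))"

definition iid_gauss :: "real \<Rightarrow> (real ^ 'n) measure" where
  "iid_gauss v = density lborel (\<lambda>y. \<Prod>i\<in>UNIV. normal_density 0 (sqrt v) (y $ i))"

text \<open>P_x mu: law of (f^s(x_1),...,f^s(x_n)) + eps, eps ~ N(0, v I_n) independent of f^s.
  The noisy process law mu is represented by its smooth part (M, fs) and noise variance v.\<close>
definition Px :: "'w measure \<Rightarrow> ('w \<Rightarrow> real \<Rightarrow> real) \<Rightarrow> real \<Rightarrow> real ^ 'n \<Rightarrow> (real ^ 'n) measure" where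
  "Px M fs v x = distr (M \<Otimes>\<^sub>M iid_gauss v) borel
      (\<lambda>(\<omega>, e). (\<chi> i. fs \<omega> (x $ i)) + e)"

definition mean_vec :: "(real ^ 'n) measure \<Rightarrow> 'n \<Rightarrow> real" where
  "mean_vec P i = (\<integral>y. y $ i \<partial>P)"

definition cov_mat :: "(real ^ 'n) measure \<Rightarrow> 'n \<Rightarrow> 'n \<Rightarrow> real" where
  "cov_mat P i j = (\<integral>y. (y $ i - mean_vec P i) * (y $ j - mean_vec P j) \<partial>P)"

definition has_mean_cov :: "(real ^ 'n) measure \<Rightarrow> bool" where
  "has_mean_cov P \<longleftrightarrow> (\<forall>i. integrable P (\<lambda>y. (y $ i)\<^sup>2))"

text \<open>Note the library's KL_divergence b Q P is int log_b(dP/dQ) dP.\<close>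
definition KL :: "'a measure \<Rightarrow> 'a measure \<Rightarrow> ereal" where
  "KL P Q = (if absolutely_continuous Q P \<and> integrable P (entropy_density (exp 1) Q P)
             then ereal (KL_divergence (exp 1) Q P) else \<infinity>)"

end

theory Submission
  imports Defs
begin

text \<open>The law \<open>P\<^sub>x\<mu>\<close> has the Lebesgue density \<open>p(y) = E \<phi>\<^sub>v(y - F)\<close>, a mixture of
  \<open>N(0, v I\<^sub>n)\<close> densities centred at the random point \<open>F = (f\<^sup>s(x\<^sub>1), ..., f\<^sup>s(x\<^sub>n))\<close>,
  and likewise \<open>P\<^sub>x\<nu>\<close> has density \<open>q(y) = E \<phi>\<^sub>w(y - G)\<close>. Clearly \<open>p \<le> \<phi>\<^sub>v(0)\<close>,
  while Jensen's inequality for \<open>exp\<close> gives \<open>q(y) \<ge> \<phi>\<^sub>w(0) exp (-(|y|\<^sup>2 + E|G|\<^sup>2) / w)\<close>.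
  So \<open>ln (p/q)\<close> is bounded by a quadratic in \<open>y\<close>, and integrating against \<open>p\<close> bounds the
  KL divergence by the second moments of both laws, which the mean and covariance bounds
  control.\<close>

lemma measurable_vec_lambda [measurable]:
  assumes "\<And>i. (\<lambda>w. f w i) \<in> borel_measurable M"
  shows "(\<lambda>w. (\<chi> i. f w i) :: real ^ 'n) \<in> borel_measurable M"
proof (subst borel_measurable_euclidean_space, intro ballI)
  fix b :: "real ^ 'n" assume "b \<in> Basis"
  then obtain i where "b = axis i 1" by (auto simp: Basis_vec_def)
  then show "(\<lambda>w. (\<chi> i. f w i) \<bullet> b) \<in> borel_measurable M"
    using assms[of i] by (simp add: inner_axis)
qed

lemma nn_integral_lborel_vec_prod:
  fixes f :: "'n::finite \<Rightarrow> real \<Rightarrow> ennreal"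
  assumes [measurable]: "\<And>i. f i \<in> borel_measurable borel"
  shows "(\<integral>\<^sup>+y. (\<Prod>i\<in>UNIV. f i (y $ i)) \<partial>(lborel :: (real ^ 'n) measure))
       = (\<Prod>i\<in>UNIV. \<integral>\<^sup>+t. f i t \<partial>lborel)"
proof -
  define g where "g b = f (SOME i. b = axis i (1::real))" for b :: "real ^ 'n"
  have inj: "inj (\<lambda>i::'n. axis i (1::real))" by (auto simp: inj_on_def axis_eq_axis)
  have Basis: "(Basis :: (real ^ 'n) set) = range (\<lambda>i. axis i 1)" by (auto simp: Basis_vec_def)
  have g: "g (axis i 1) = f i" for i
    unfolding g_def by (rule arg_cong[where f=f], rule some_equality) (auto simp: axis_eq_axis)
  have "(\<integral>\<^sup>+y. (\<Prod>b\<in>Basis. g b (y \<bullet> b)) \<partial>(lborel :: (real ^ 'n) measure))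
      = (\<Prod>b\<in>Basis. \<integral>\<^sup>+t. g b t \<partial>lborel)"
    by (rule nn_integral_lborel_prod) (auto simp: Basis g)
  then show ?thesis
    unfolding Basis by (simp add: prod.reindex[OF inj] g inner_axis)
qed

lemma nn_integral_lborel_translate:
  fixes c :: "'a::euclidean_space"
  assumes [measurable]: "g \<in> borel_measurable borel"
  shows "(\<integral>\<^sup>+e. g (c + e) \<partial>lborel) = (\<integral>\<^sup>+y. g y \<partial>lborel)"
  by (subst (2) lborel_distr_plus[of c, symmetric]) (simp add: nn_integral_distr)

lemma has_bochner_integral_normal_density_sq:
  assumes "0 < s"
  shows "has_bochner_integral lborel (\<lambda>t. normal_density 0 s t * (c + t)\<^sup>2) (c\<^sup>2 + s\<^sup>2)"
proof -
  have "has_bochner_integral lborel (\<lambda>t. c\<^sup>2 * normal_density 0 s t) (c\<^sup>2 * 1)"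
    by (intro has_bochner_integral_mult_right)
       (metis has_bochner_integral_integrable integral_normal_density integrable_normal_density assms)
  moreover have "has_bochner_integral lborel (\<lambda>t. 2 * c * (normal_density 0 s t * t)) (2 * c * 0)"
    by (intro has_bochner_integral_mult_right normal_moment_nz_1 assms)
  moreover have "has_bochner_integral lborel (\<lambda>t. normal_density 0 s t * t\<^sup>2) (s\<^sup>2)"
    using normal_moment_even[OF assms, of 0 1] by (simp add: numeral_eq_Suc)
  ultimately have "has_bochner_integral lborel
      (\<lambda>t. c\<^sup>2 * normal_density 0 s t + 2 * c * (normal_density 0 s t * t) + normal_density 0 s t * t\<^sup>2)
      (c\<^sup>2 * 1 + 2 * c * 0 + s\<^sup>2)"
    by (intro has_bochner_integral_add)
  then show ?thesis
    by (rule has_bochner_integral_cong[THEN iffD1, rotated -1]) (auto simp: power2_eq_square algebra_simps)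
qed

definition gauss_density :: "real \<Rightarrow> real ^ 'n \<Rightarrow> real" where
  "gauss_density v z = (\<Prod>i\<in>UNIV. normal_density 0 (sqrt v) (z $ i))"

lemma borel_measurable_gauss_density [measurable]: "gauss_density v \<in> borel_measurable borel"
  unfolding gauss_density_def by measurable

lemma iid_gauss_eq_density: "iid_gauss v = density lborel (gauss_density v)"
  unfolding iid_gauss_def gauss_density_def ..

lemma nn_integral_iid_gauss_translate:
  fixes c :: "real ^ 'n" and g :: "real ^ 'n \<Rightarrow> ennreal"
  assumes [measurable]: "g \<in> borel_measurable borel"
  shows "(\<integral>\<^sup>+e. g (c + e) \<partial>iid_gauss v) = (\<integral>\<^sup>+y. ennreal (gauss_density v (y - c)) * g y \<partial>lborel)"
proof -
  have "(\<integral>\<^sup>+e. g (c + e) \<partial>iid_gauss v)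
      = (\<integral>\<^sup>+e. ennreal (gauss_density v ((c + e) - c)) * g (c + e) \<partial>lborel)"
    by (simp add: iid_gauss_eq_density nn_integral_density)
  also have "\<dots> = (\<integral>\<^sup>+y. ennreal (gauss_density v (y - c)) * g y \<partial>lborel)"
    by (rule nn_integral_lborel_translate[where g = "\<lambda>y. ennreal (gauss_density v (y - c)) * g y"])
      measurable
  finally show ?thesis .
qed

lemma gauss_density_eq:
  fixes z :: "real ^ 'n"
  assumes "0 < v"
  shows "gauss_density v z = gauss_density v (0 :: real ^ 'n) * exp (- (\<Sum>i\<in>UNIV. (z $ i)\<^sup>2) / (2 * v))"
proof -
  have "gauss_density v z = (\<Prod>i\<in>UNIV. (1 / sqrt (2 * pi * v)) * exp (- (z $ i)\<^sup>2 / (2 * v)))"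
    unfolding gauss_density_def normal_density_def using assms by simp
  also have "\<dots> = (1 / sqrt (2 * pi * v)) ^ CARD('n) * exp (\<Sum>i\<in>UNIV. - (z $ i)\<^sup>2 / (2 * v))"
    by (subst prod.distrib) (simp add: exp_sum)
  also have "(1 / sqrt (2 * pi * v)) ^ CARD('n) = gauss_density v (0 :: real ^ 'n)"
    unfolding gauss_density_def normal_density_def using assms by simp
  finally show ?thesis
    by (simp add: sum_divide_distrib sum_negf)
qed

lemma gauss_density_pos: "0 < v \<Longrightarrow> 0 < gauss_density v z"
  unfolding gauss_density_def by (auto intro!: prod_pos normal_density_pos)

lemma gauss_density_le:
  fixes z :: "real ^ 'n"
  assumes "0 < v"
  shows "gauss_density v z \<le> gauss_density v (0 :: real ^ 'n)"
proof -
  have "exp (- (\<Sum>i\<in>UNIV. (z $ i)\<^sup>2) / (2 * v)) \<le> 1"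
    using assms by (auto intro!: divide_nonneg_pos sum_nonneg)
  from mult_left_le[OF this less_imp_le[OF gauss_density_pos[OF assms, of 0]]] show ?thesis
    by (subst gauss_density_eq[OF assms, of z])
qed

lemma ln_gauss_density_0:
  assumes "0 < v"
  shows "ln (gauss_density v (0 :: real ^ 'n)) = - real CARD('n) * (ln (2 * pi) + ln v) / 2"
  using assms by (simp add: gauss_density_def normal_density_def ln_realpow ln_div ln_sqrt ln_mult)

lemma nn_integral_gauss_density_mult_sq:
  assumes "0 < v"
  shows "(\<integral>\<^sup>+z. ennreal (gauss_density v z * (c + z $ j)\<^sup>2) \<partial>(lborel :: (real ^ 'n) measure))
       = ennreal (c\<^sup>2 + v)"
proof -
  define f where "f i t = ennreal (normal_density 0 (sqrt v) t * (if i = j then (c + t)\<^sup>2 else 1))" for i t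
  have "(\<integral>\<^sup>+z. ennreal (gauss_density v z * (c + z $ j)\<^sup>2) \<partial>(lborel :: (real ^ 'n) measure))
      = (\<integral>\<^sup>+z. (\<Prod>i\<in>UNIV. f i (z $ i)) \<partial>lborel)"
    by (intro nn_integral_cong) (simp add: f_def gauss_density_def prod_ennreal prod.distrib prod.If_cases)
  also have "\<dots> = (\<Prod>i\<in>UNIV. \<integral>\<^sup>+t. f i t \<partial>lborel)"
    by (rule nn_integral_lborel_vec_prod) (unfold f_def, measurable)
  also have "\<dots> = (\<Prod>i\<in>(UNIV :: 'n set). if i = j then ennreal (c\<^sup>2 + v) else 1)"
    using has_bochner_integral_normal_density_sq[of "sqrt v" c] assms
    by (intro prod.cong refl) (auto simp: f_def has_bochner_integral_iff nn_integral_eq_integral)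
  finally show ?thesis by (simp add: prod.If_cases)
qed

lemma nn_integral_gauss_density:
  assumes "0 < v"
  shows "(\<integral>\<^sup>+z. ennreal (gauss_density v z) \<partial>(lborel :: (real ^ 'n) measure)) = 1"
proof -
  have "(\<integral>\<^sup>+z. ennreal (gauss_density v z) \<partial>(lborel :: (real ^ 'n) measure))
      = (\<integral>\<^sup>+z. (\<Prod>i\<in>UNIV. ennreal (normal_density 0 (sqrt v) (z $ i))) \<partial>(lborel :: (real ^ 'n) measure))"
    by (simp add: gauss_density_def prod_ennreal)
  also have "\<dots> = (\<Prod>i\<in>(UNIV :: 'n set). \<integral>\<^sup>+t. ennreal (normal_density 0 (sqrt v) t) \<partial>lborel)"
    by (rule nn_integral_lborel_vec_prod) measurable
  also have "\<dots> = 1"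
    using assms by (simp add: nn_integral_eq_integral)
  finally show ?thesis .
qed

lemma prob_space_iid_gauss: "0 < v \<Longrightarrow> prob_space (iid_gauss v)"
  unfolding iid_gauss_eq_density
  by (rule prob_spaceI) (simp add: emeasure_density nn_integral_gauss_density)

lemma integrable_prob_space_density:
  fixes f :: "'a \<Rightarrow> real"
  assumes [measurable]: "f \<in> borel_measurable M" and nonneg: "\<And>x. 0 \<le> f x"
    and "prob_space (density M f)"
  shows "integrable M f"
proof (rule integrableI_nn_integral_finite[where x = 1])
  have "emeasure (density M f) (space M) = 1"
    using prob_space.emeasure_space_1[OF assms(3)] by simp
  then show "(\<integral>\<^sup>+x. ennreal (f x) \<partial>M) = ennreal 1"
    by (simp add: emeasure_density nn_integral_cong[of M "\<lambda>x. ennreal (f x) * indicator (space M) x"])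
qed (use nonneg in auto)

lemma diff_le_mult_ln_div:
  fixes a b :: real
  assumes "0 < a" "0 < b"
  shows "a - b \<le> a * ln (a / b)"
proof -
  have "ln (b / a) \<le> b / a - 1"
    using assms by (intro ln_le_minus_one) simp
  then show ?thesis
    using assms by (simp add: ln_div field_simps)
qed

lemma (in sigma_finite_measure) AE_entropy_density_density:
  fixes p q :: "'a \<Rightarrow> real"
  assumes [measurable]: "p \<in> borel_measurable M" "q \<in> borel_measurable M"
    and p_pos: "\<And>x. 0 < p x" and q_pos: "\<And>x. 0 < q x"
    and "prob_space (density M q)"
  shows "absolutely_continuous (density M q) (density M p)"
    and "AE x in density M p. entropy_density (exp 1) (density M q) (density M p) x = ln (p x / q x)"
proof -
  let ?P = "density M p" and ?Q = "density M q"
  interpret Q: prob_space ?Q by fact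
  have PQ: "density ?Q (\<lambda>x. p x / q x) = ?P"
    using p_pos q_pos by (intro density_density_divide) (auto simp: less_imp_le less_imp_neq[symmetric])
  show ac: "absolutely_continuous ?Q ?P"
    using absolutely_continuousI_density[of "\<lambda>x. ennreal (p x / q x)" ?Q] by (simp add: PQ)
  have "AE x in ?Q. ennreal (p x / q x) = RN_deriv ?Q ?P x"
    by (rule Q.RN_deriv_unique[OF _ PQ]) simp
  then have "AE x in ?P. ennreal (p x / q x) = RN_deriv ?Q ?P x"
    by (rule absolutely_continuous_AE[OF _ ac, rotated]) simp
  then show "AE x in ?P. entropy_density (exp 1) ?Q ?P x = ln (p x / q x)"
  proof (rule eventually_mono)
    fix x assume "ennreal (p x / q x) = RN_deriv ?Q ?P x"
    then show "entropy_density (exp 1) ?Q ?P x = ln (p x / q x)"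
      using p_pos[of x] q_pos[of x]
      by (simp add: entropy_density_def log_def flip: \<open>ennreal (p x / q x) = _\<close>)
  qed
qed

lemma (in sigma_finite_measure) KL_density_density_le:
  fixes p q h :: "'a \<Rightarrow> real"
  assumes meas [measurable]: "p \<in> borel_measurable M" "q \<in> borel_measurable M"
    and p_pos: "\<And>x. 0 < p x" and q_pos: "\<And>x. 0 < q x"
    and prob: "prob_space (density M p)" "prob_space (density M q)"
    and ln_le: "\<And>x. ln (p x / q x) \<le> h x"
    and int_h: "integrable M (\<lambda>x. p x * h x)"
  shows "KL (density M p) (density M q) \<le> ereal (\<integral>x. p x * h x \<partial>M)"
proof -
  let ?P = "density M p" and ?Q = "density M q"
  define f where "f x = p x * ln (p x / q x)" for x
  have f_le: "f x \<le> p x * h x" for x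
    unfolding f_def using ln_le p_pos by (intro mult_left_mono) (auto simp: less_imp_le)
  \<comment> \<open>\<open>f\<close> is sandwiched between the integrable functions \<open>p - q\<close> and \<open>p * h\<close>.\<close>
  have int_f: "integrable M f"
  proof (rule Bochner_Integration.integrable_bound[of _ "\<lambda>x. \<bar>p x - q x\<bar> + \<bar>p x * h x\<bar>"])
    show "integrable M (\<lambda>x. \<bar>p x - q x\<bar> + \<bar>p x * h x\<bar>)"
      using integrable_prob_space_density[OF meas(1) less_imp_le[OF p_pos] prob(1)]
        integrable_prob_space_density[OF meas(2) less_imp_le[OF q_pos] prob(2)] int_h
      by (intro Bochner_Integration.integrable_add Bochner_Integration.integrable_abs
          Bochner_Integration.integrable_diff)
    have "\<bar>f x\<bar> \<le> \<bar>p x - q x\<bar> + \<bar>p x * h x\<bar>" for x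
      using f_le[of x] diff_le_mult_ln_div[OF p_pos[of x] q_pos[of x]] unfolding f_def by linarith
    then show "AE x in M. norm (f x) \<le> norm (\<bar>p x - q x\<bar> + \<bar>p x * h x\<bar>)"
      by (intro AE_I2) simp
  qed (unfold f_def, measurable)
  note entropy = AE_entropy_density_density[OF meas p_pos q_pos prob(2)]
  have "integrable ?P (\<lambda>x. ln (p x / q x))"
    using int_f[unfolded f_def[abs_def]]
    by (subst integrable_density) (simp_all add: less_imp_le[OF p_pos])
  then have "integrable ?P (entropy_density (exp 1) ?Q ?P)"
    by (rule integrable_cong_AE_imp) (use entropy(2) in \<open>auto simp: eq_commute\<close>)
  moreover have "KL_divergence (exp 1) ?Q ?P = (\<integral>x. f x \<partial>M)"
    using p_pos q_pos
    by (subst KL_density_density) (auto simp: f_def[abs_def] log_def less_imp_le less_imp_neq[symmetric])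
  moreover have "(\<integral>x. f x \<partial>M) \<le> (\<integral>x. p x * h x \<partial>M)"
    using int_f int_h f_le by (rule integral_mono)
  ultimately show ?thesis
    using entropy(1) by (simp add: KL_def)
qed

lemma (in prob_space) integrable_diff_sq:
  fixes X :: "'a \<Rightarrow> real"
  assumes [measurable]: "X \<in> borel_measurable M" and int: "integrable M (\<lambda>w. (X w)\<^sup>2)"
  shows "integrable M (\<lambda>w. (c - X w)\<^sup>2)"
  using int by (simp add: power2_diff square_integrable_imp_integrable)

lemma (in prob_space) integral_diff_sq_le:
  fixes X :: "'a \<Rightarrow> real"
  assumes [measurable]: "X \<in> borel_measurable M" and int: "integrable M (\<lambda>w. (X w)\<^sup>2)"
  shows "(\<integral>w. (c - X w)\<^sup>2 \<partial>M) \<le> 2 * c\<^sup>2 + 2 * (\<integral>w. (X w)\<^sup>2 \<partial>M)"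
proof -
  have "(c - X w)\<^sup>2 \<le> 2 * c\<^sup>2 + 2 * (X w)\<^sup>2" for w
    using zero_le_power2[of "c + X w"] by (simp add: power2_eq_square algebra_simps)
  then have "(\<integral>w. (c - X w)\<^sup>2 \<partial>M) \<le> (\<integral>w. 2 * c\<^sup>2 + 2 * (X w)\<^sup>2 \<partial>M)"
    using integrable_diff_sq[OF assms] int by (intro integral_mono) auto
  then show ?thesis
    using int by (simp add: prob_space)
qed

definition sample_vec :: "('w \<Rightarrow> real \<Rightarrow> real) \<Rightarrow> real ^ 'n \<Rightarrow> 'w \<Rightarrow> real ^ 'n" where
  "sample_vec fs x w = (\<chi> i. fs w (x $ i))"

definition second_moment :: "(real ^ 'n) measure \<Rightarrow> real" where
  "second_moment P = (\<Sum>j\<in>UNIV. \<integral>y. (y $ j)\<^sup>2 \<partial>P)"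

locale noisy_sample = prob_space M for M :: "'w measure" +
  fixes fs :: "'w \<Rightarrow> real \<Rightarrow> real" and v :: real and x :: "real ^ 'n"
  assumes measurable_fs [measurable]: "\<And>t. (\<lambda>w. fs w t) \<in> borel_measurable M"
    and noise_pos: "0 < v"
begin

lemma measurable_sample_vec [measurable]: "sample_vec fs x \<in> borel_measurable M"
  unfolding sample_vec_def by measurable

lemma measurable_sample_vec_nth [measurable]: "(\<lambda>w. sample_vec fs x w $ j) \<in> borel_measurable M"
  unfolding sample_vec_def by simp

interpretation noise: prob_space "iid_gauss v :: (real ^ 'n) measure"
  by (rule prob_space_iid_gauss[OF noise_pos])

lemma measurable_sample_plus_noise [measurable]:
  "(\<lambda>(w, e). sample_vec fs x w + e) \<in> borel_measurable (M \<Otimes>\<^sub>M iid_gauss v)"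
  unfolding iid_gauss_eq_density by measurable

lemma Px_eq_distr:
  "Px M fs v x = distr (M \<Otimes>\<^sub>M iid_gauss v) borel (\<lambda>(w, e). sample_vec fs x w + e)"
  unfolding Px_def sample_vec_def ..

lemma sets_Px [measurable_cong]: "sets (Px M fs v x) = sets borel"
  by (simp add: Px_eq_distr)

lemma prob_space_Px: "prob_space (Px M fs v x)"
proof -
  interpret pair: prob_space "M \<Otimes>\<^sub>M iid_gauss v :: ('w \<times> (real ^ 'n)) measure"
    by (intro prob_space_pair prob_space_axioms noise.prob_space_axioms)
  show ?thesis
    unfolding Px_eq_distr by (rule pair.prob_space_distr) measurable
qed

lemma nn_integral_Px:
  assumes [measurable]: "g \<in> borel_measurable borel"
  shows "(\<integral>\<^sup>+y. g y \<partial>Px M fs v x) = (\<integral>\<^sup>+w. \<integral>\<^sup>+e. g (sample_vec fs x w + e) \<partial>iid_gauss v \<partial>M)"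
  unfolding Px_eq_distr
  by (simp add: nn_integral_distr case_prod_beta' noise.nn_integral_fst[symmetric])

definition noisy_density :: "real ^ 'n \<Rightarrow> real" where
  "noisy_density y = (\<integral>w. gauss_density v (y - sample_vec fs x w) \<partial>M)"

lemma borel_measurable_noisy_density [measurable]: "noisy_density \<in> borel_measurable borel"
  unfolding noisy_density_def by measurable

lemma integrable_gauss_density_sample: "integrable M (\<lambda>w. gauss_density v (y - sample_vec fs x w))"
  by (intro integrable_const_bound[where B = "gauss_density v (0 :: real ^ 'n)"] AE_I2)
    (simp_all add: abs_of_pos gauss_density_pos[OF noise_pos] gauss_density_le[OF noise_pos])

lemma noisy_density_pos: "0 < noisy_density y"
  unfolding noisy_density_def
  by (intro expectation_greater integrable_gauss_density_sample) (simp add: gauss_density_pos[OF noise_pos])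

lemma noisy_density_le: "noisy_density y \<le> gauss_density v (0 :: real ^ 'n)"
proof -
  have "noisy_density y \<le> (\<integral>w. gauss_density v (0 :: real ^ 'n) \<partial>M)"
    unfolding noisy_density_def
    by (intro integral_mono integrable_gauss_density_sample gauss_density_le[OF noise_pos]) simp
  then show ?thesis by (simp add: prob_space)
qed

lemma Px_eq_density: "Px M fs v x = density lborel noisy_density"
proof (rule measure_eqI)
  fix A assume "A \<in> sets (Px M fs v x)"
  then have [measurable]: "A \<in> sets borel" by (simp add: sets_Px)
  have "emeasure (Px M fs v x) A
      = (\<integral>\<^sup>+w. \<integral>\<^sup>+y. ennreal (gauss_density v (y - sample_vec fs x w)) * indicator A y \<partial>lborel \<partial>M)"
    by (simp add: nn_integral_Px nn_integral_iid_gauss_translate flip: nn_integral_indicator)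
  also have "\<dots> = (\<integral>\<^sup>+y. \<integral>\<^sup>+w. ennreal (gauss_density v (y - sample_vec fs x w)) * indicator A y \<partial>M \<partial>lborel)"
    by (rule pair_sigma_finite.Fubini'[symmetric])
      (auto intro: pair_sigma_finite.intro sigma_finite_measure_axioms lborel.sigma_finite_measure_axioms)
  also have "\<dots> = (\<integral>\<^sup>+y. ennreal (noisy_density y) * indicator A y \<partial>lborel)"
    by (intro nn_integral_cong)
      (simp add: nn_integral_multc nn_integral_eq_integral integrable_gauss_density_sample
        gauss_density_pos[OF noise_pos] less_imp_le noisy_density_def)
  finally show "emeasure (Px M fs v x) A = emeasure (density lborel noisy_density) A"
    by (simp add: emeasure_density)
qed (simp add: sets_Px)

lemma has_bochner_integral_sample_sq:
  assumes "integrable (Px M fs v x) (\<lambda>y. (y $ j)\<^sup>2)"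
  shows "has_bochner_integral M (\<lambda>w. (sample_vec fs x w $ j)\<^sup>2) ((\<integral>y. (y $ j)\<^sup>2 \<partial>Px M fs v x) - v)"
proof -
  have [measurable]: "(\<lambda>w. (sample_vec fs x w $ j)\<^sup>2 + v) \<in> borel_measurable M"
    by measurable
  have noise_sq: "(\<integral>\<^sup>+e. ennreal ((c + e $ j)\<^sup>2) \<partial>iid_gauss v) = ennreal (c\<^sup>2 + v)" for c
    using nn_integral_gauss_density_mult_sq[OF noise_pos, of c j]
    by (simp add: iid_gauss_eq_density nn_integral_density ennreal_mult
        less_imp_le[OF gauss_density_pos[OF noise_pos]])
  have "(\<integral>\<^sup>+w. ennreal ((sample_vec fs x w $ j)\<^sup>2 + v) \<partial>M) = (\<integral>\<^sup>+y. ennreal ((y $ j)\<^sup>2) \<partial>Px M fs v x)"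
    by (simp add: nn_integral_Px noise_sq)
  also have "\<dots> = ennreal (\<integral>y. (y $ j)\<^sup>2 \<partial>Px M fs v x)"
    using assms by (intro nn_integral_eq_integral) auto
  finally have "has_bochner_integral M (\<lambda>w. (sample_vec fs x w $ j)\<^sup>2 + v) (\<integral>y. (y $ j)\<^sup>2 \<partial>Px M fs v x)"
    using noise_pos by (intro has_bochner_integral_nn_integral) (auto intro!: integral_nonneg_AE)
  from has_bochner_integral_diff[OF this has_bochner_integral_integrable[of M "\<lambda>_. v"]]
  show ?thesis by (simp add: prob_space)
qed

lemma sum_integral_sample_sq:
  assumes "has_mean_cov (Px M fs v x)"
  shows "(\<Sum>j\<in>UNIV. \<integral>w. (sample_vec fs x w $ j)\<^sup>2 \<partial>M) = second_moment (Px M fs v x) - CARD('n) * v"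
  using has_bochner_integral_sample_sq assms
  by (simp add: has_mean_cov_def second_moment_def has_bochner_integral_iff sum_subtractf)

lemma noise_le_second_moment:
  assumes "has_mean_cov (Px M fs v x)"
  shows "CARD('n) * v \<le> second_moment (Px M fs v x)"
proof -
  have "0 \<le> (\<Sum>j\<in>UNIV. \<integral>w. (sample_vec fs x w $ j)\<^sup>2 \<partial>M)"
    by (intro sum_nonneg integral_nonneg_AE) auto
  then show ?thesis using sum_integral_sample_sq[OF assms] by simp
qed

lemma noisy_density_eq_expectation:
  "noisy_density y = gauss_density v (0 :: real ^ 'n)
     * expectation (\<lambda>w. exp (- (\<Sum>i\<in>UNIV. (y $ i - sample_vec fs x w $ i)\<^sup>2) / (2 * v)))"
proof -
  have "gauss_density v (y - sample_vec fs x w) = gauss_density v (0 :: real ^ 'n)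
      * exp (- (\<Sum>i\<in>UNIV. (y $ i - sample_vec fs x w $ i)\<^sup>2) / (2 * v))" for w
    using gauss_density_eq[OF noise_pos, of "y - sample_vec fs x w"] by simp
  then show ?thesis
    unfolding noisy_density_def by simp
qed

lemma integrable_dist_sample_sq:
  assumes "has_mean_cov (Px M fs v x)"
  shows "integrable M (\<lambda>w. (y $ i - sample_vec fs x w $ i)\<^sup>2)"
    and "(\<Sum>i\<in>UNIV. \<integral>w. (y $ i - sample_vec fs x w $ i)\<^sup>2 \<partial>M)
           \<le> 2 * ((\<Sum>j\<in>UNIV. (y $ j)\<^sup>2) + (second_moment (Px M fs v x) - CARD('n) * v))"
proof -
  have int_G: "integrable M (\<lambda>w. (sample_vec fs x w $ i)\<^sup>2)" for i
    using has_bochner_integral_sample_sq assms by (auto simp: has_mean_cov_def has_bochner_integral_iff)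
  then show "integrable M (\<lambda>w. (y $ i - sample_vec fs x w $ i)\<^sup>2)"
    by (intro integrable_diff_sq) simp_all
  have "(\<integral>w. (y $ i - sample_vec fs x w $ i)\<^sup>2 \<partial>M)
      \<le> 2 * (y $ i)\<^sup>2 + 2 * (\<integral>w. (sample_vec fs x w $ i)\<^sup>2 \<partial>M)" for i
    by (rule integral_diff_sq_le) (simp_all add: int_G)
  then have "(\<Sum>i\<in>UNIV. \<integral>w. (y $ i - sample_vec fs x w $ i)\<^sup>2 \<partial>M)
      \<le> (\<Sum>i\<in>UNIV. 2 * (y $ i)\<^sup>2 + 2 * (\<integral>w. (sample_vec fs x w $ i)\<^sup>2 \<partial>M))"
    by (rule sum_mono)
  also have "\<dots> = 2 * ((\<Sum>j\<in>UNIV. (y $ j)\<^sup>2) + (second_moment (Px M fs v x) - CARD('n) * v))"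
    by (simp add: sum.distrib sum_distrib_left[symmetric] sum_integral_sample_sq[OF assms])
  finally show "(\<Sum>i\<in>UNIV. \<integral>w. (y $ i - sample_vec fs x w $ i)\<^sup>2 \<partial>M)
      \<le> 2 * ((\<Sum>j\<in>UNIV. (y $ j)\<^sup>2) + (second_moment (Px M fs v x) - CARD('n) * v))" .
qed

lemma noisy_density_lower_bound:
  assumes "has_mean_cov (Px M fs v x)"
  shows "gauss_density v (0 :: real ^ 'n)
           * exp (- ((\<Sum>j\<in>UNIV. (y $ j)\<^sup>2) + (second_moment (Px M fs v x) - CARD('n) * v)) / v)
         \<le> noisy_density y"
proof -
  define R where "R = (\<Sum>j\<in>UNIV. (y $ j)\<^sup>2) + (second_moment (Px M fs v x) - CARD('n) * v)"
  define X where "X w = - (\<Sum>i\<in>UNIV. (y $ i - sample_vec fs x w $ i)\<^sup>2) / (2 * v)" for w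
  note int_dist = integrable_dist_sample_sq[OF assms, of y]
  have "- R / v \<le> expectation X"
    using int_dist(1) int_dist(2)[folded R_def] noise_pos unfolding X_def by (simp add: field_simps)
  then have "exp (- R / v) \<le> exp (expectation X)"
    by simp
  also have "\<dots> \<le> expectation (\<lambda>w. exp (X w))"
  proof (rule jensens_inequality[where I = UNIV and q = exp])
    show "integrable M X"
      unfolding X_def using int_dist by auto
    have "X w \<le> 0" for w
      unfolding X_def using noise_pos by (auto intro!: divide_nonneg_pos sum_nonneg)
    then show "integrable M (\<lambda>w. exp (X w))"
      by (intro integrable_const_bound[where B = 1] AE_I2) (auto simp: X_def)
  qed (auto simp: exp_convex)
  finally show ?thesis
    using gauss_density_pos[OF noise_pos, of "0 :: real ^ 'n"]
    by (simp add: noisy_density_eq_expectation X_def R_def)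
qed

lemma has_bochner_integral_noisy_density: "has_bochner_integral lborel noisy_density 1"
proof (rule has_bochner_integral_nn_integral)
  show "(\<integral>\<^sup>+y. ennreal (noisy_density y) \<partial>lborel) = ennreal 1"
    using prob_space.emeasure_space_1[OF prob_space_Px]
    by (simp add: Px_eq_density emeasure_density)
qed (auto simp: less_imp_le noisy_density_pos)

lemma has_bochner_integral_noisy_density_sum_sq:
  assumes "has_mean_cov (Px M fs v x)"
  shows "has_bochner_integral lborel (\<lambda>y. noisy_density y * (\<Sum>j\<in>UNIV. (y $ j)\<^sup>2))
           (second_moment (Px M fs v x))"
proof -
  let ?S = "\<lambda>y :: real ^ 'n. \<Sum>j\<in>UNIV. (y $ j)\<^sup>2"
  have nonneg: "AE y in lborel. 0 \<le> noisy_density y"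
    by (intro AE_I2 less_imp_le noisy_density_pos)
  have "integrable (density lborel noisy_density) ?S"
    using assms by (simp add: has_mean_cov_def Px_eq_density)
  then have "integrable lborel (\<lambda>y. noisy_density y * ?S y)"
    by (subst (asm) integrable_density[OF _ _ nonneg]) simp_all
  moreover have "(\<integral>y. ?S y \<partial>density lborel noisy_density) = second_moment (Px M fs v x)"
    using assms by (simp add: has_mean_cov_def Px_eq_density second_moment_def)
  then have "(\<integral>y. noisy_density y * ?S y \<partial>lborel) = second_moment (Px M fs v x)"
    by (subst (asm) integral_density[OF _ _ nonneg]) simp_all
  ultimately show ?thesis
    by (simp add: has_bochner_integral_iff)
qed

end

lemma ln_noisy_density_ratio_le:
  fixes x y :: "real ^ 'n" and v\<^sub>\<mu> v\<^sub>\<nu> :: real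
  assumes "noisy_sample M fs v\<^sub>\<mu>" "noisy_sample N gs v\<^sub>\<nu>" and mom: "has_mean_cov (Px N gs v\<^sub>\<nu> x)"
  shows "ln (noisy_sample.noisy_density M fs v\<^sub>\<mu> x y / noisy_sample.noisy_density N gs v\<^sub>\<nu> x y)
    \<le> ln (gauss_density v\<^sub>\<mu> (0 :: real ^ 'n)) - ln (gauss_density v\<^sub>\<nu> (0 :: real ^ 'n))
      + ((\<Sum>j\<in>UNIV. (y $ j)\<^sup>2) + (second_moment (Px N gs v\<^sub>\<nu> x) - CARD('n) * v\<^sub>\<nu>)) / v\<^sub>\<nu>"
proof -
  interpret mu: noisy_sample M fs v\<^sub>\<mu> x by fact
  interpret nu: noisy_sample N gs v\<^sub>\<nu> x by fact
  let ?p = mu.noisy_density and ?q = nu.noisy_density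
  define R where "R = (\<Sum>j\<in>UNIV. (y $ j)\<^sup>2) + (second_moment (Px N gs v\<^sub>\<nu> x) - CARD('n) * v\<^sub>\<nu>)"
  have "ln (?p y) \<le> ln (gauss_density v\<^sub>\<mu> (0 :: real ^ 'n))"
    by (intro ln_mono mu.noisy_density_pos mu.noisy_density_le)
  moreover have "ln (gauss_density v\<^sub>\<nu> (0 :: real ^ 'n)) - R / v\<^sub>\<nu> \<le> ln (?q y)"
    using ln_mono[OF nu.noisy_density_lower_bound[OF mom, of y, folded R_def]]
      gauss_density_pos[OF nu.noise_pos, of "0 :: real ^ 'n"]
    by (simp add: ln_mult diff_divide_distrib)
  moreover have "ln (?p y / ?q y) = ln (?p y) - ln (?q y)"
    using mu.noisy_density_pos[of y] nu.noisy_density_pos[of y] by (simp add: ln_div)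
  ultimately show ?thesis
    unfolding R_def by linarith
qed

lemma KL_Px_le_second_moment:
  fixes x :: "real ^ 'n" and v\<^sub>\<mu> v\<^sub>\<nu> :: real
  assumes "noisy_sample M fs v\<^sub>\<mu>" "noisy_sample N gs v\<^sub>\<nu>"
    and mom: "has_mean_cov (Px M fs v\<^sub>\<mu> x)" "has_mean_cov (Px N gs v\<^sub>\<nu> x)"
  shows "KL (Px M fs v\<^sub>\<mu> x) (Px N gs v\<^sub>\<nu> x)
    \<le> ereal (CARD('n) / 2 * ln (v\<^sub>\<nu> / v\<^sub>\<mu>)
               + (second_moment (Px M fs v\<^sub>\<mu> x) + second_moment (Px N gs v\<^sub>\<nu> x)) / v\<^sub>\<nu> - CARD('n))"
proof -
  interpret mu: noisy_sample M fs v\<^sub>\<mu> x by fact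
  interpret nu: noisy_sample N gs v\<^sub>\<nu> x by fact
  let ?p = mu.noisy_density and ?q = nu.noisy_density
  let ?S = "\<lambda>y :: real ^ 'n. \<Sum>j\<in>UNIV. (y $ j)\<^sup>2"
  define K where "K = ln (gauss_density v\<^sub>\<mu> (0 :: real ^ 'n)) - ln (gauss_density v\<^sub>\<nu> (0 :: real ^ 'n))"
  define R where "R = second_moment (Px N gs v\<^sub>\<nu> x) - CARD('n) * v\<^sub>\<nu>"
  have ln_le: "ln (?p y / ?q y) \<le> K + (?S y + R) / v\<^sub>\<nu>" for y
    unfolding K_def R_def by (rule ln_noisy_density_ratio_le) fact+
  have "has_bochner_integral lborel (\<lambda>y. K * ?p y + (?p y * ?S y / v\<^sub>\<nu> + R / v\<^sub>\<nu> * ?p y))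
      (K * 1 + (second_moment (Px M fs v\<^sub>\<mu> x) / v\<^sub>\<nu> + R / v\<^sub>\<nu> * 1))"
    by (intro has_bochner_integral_add has_bochner_integral_mult_right has_bochner_integral_divide_zero
        mu.has_bochner_integral_noisy_density mu.has_bochner_integral_noisy_density_sum_sq mom(1))
  then have int: "has_bochner_integral lborel (\<lambda>y. ?p y * (K + (?S y + R) / v\<^sub>\<nu>))
      (K + (second_moment (Px M fs v\<^sub>\<mu> x) + R) / v\<^sub>\<nu>)"
    by (rule has_bochner_integral_cong[THEN iffD1, rotated -1]) (auto simp: algebra_simps add_divide_distrib)
  have "KL (Px M fs v\<^sub>\<mu> x) (Px N gs v\<^sub>\<nu> x) \<le> ereal (\<integral>y. ?p y * (K + (?S y + R) / v\<^sub>\<nu>) \<partial>lborel)"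
    using lborel.KL_density_density_le[OF _ _ mu.noisy_density_pos nu.noisy_density_pos
        mu.prob_space_Px[unfolded mu.Px_eq_density] nu.prob_space_Px[unfolded nu.Px_eq_density]
        ln_le integrable.intros[OF int]]
    by (simp add: mu.Px_eq_density nu.Px_eq_density)
  also have "\<dots> = K + (second_moment (Px M fs v\<^sub>\<mu> x) + R) / v\<^sub>\<nu>"
    using int by (simp add: has_bochner_integral_iff)
  also have "\<dots> = CARD('n) / 2 * ln (v\<^sub>\<nu> / v\<^sub>\<mu>)
      + (second_moment (Px M fs v\<^sub>\<mu> x) + second_moment (Px N gs v\<^sub>\<nu> x)) / v\<^sub>\<nu> - CARD('n)"
    using mu.noise_pos nu.noise_pos
    by (simp add: K_def R_def ln_gauss_density_0 ln_div field_simps)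
  finally show ?thesis .
qed

lemma integral_sq_eq_cov_mat:
  fixes P :: "(real ^ 'n) measure"
  assumes "prob_space P" and sets_P: "sets P = sets borel" and int: "integrable P (\<lambda>y. (y $ i)\<^sup>2)"
  shows "(\<integral>y. (y $ i)\<^sup>2 \<partial>P) = cov_mat P i i + (mean_vec P i)\<^sup>2"
proof -
  interpret prob_space P by fact
  have [measurable]: "(\<lambda>y. y $ i) \<in> borel_measurable P"
    by (simp add: measurable_cong_sets[OF sets_P refl])
  have "integrable P (\<lambda>y. y $ i)"
    by (rule square_integrable_imp_integrable[OF _ int]) simp
  then show ?thesis
    using int by (simp add: cov_mat_def mean_vec_def power2_eq_square algebra_simps prob_space)
qed

lemma second_moment_le:
  fixes P :: "(real ^ 'n) measure" and B :: real
  assumes "prob_space P" "sets P = sets borel" "has_mean_cov P"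
    and mean: "\<And>i. \<bar>mean_vec P i\<bar> \<le> B" and cov: "\<And>i. \<bar>cov_mat P i i\<bar> \<le> B"
  shows "second_moment P \<le> CARD('n) * (B + B\<^sup>2)"
proof -
  have "(\<integral>y. (y $ i)\<^sup>2 \<partial>P) \<le> B + B\<^sup>2" for i
  proof -
    have "(mean_vec P i)\<^sup>2 \<le> B\<^sup>2"
      using mean[of i] abs_ge_zero order_trans by (subst power2_le_iff_abs_le) blast+
    then show ?thesis
      using cov[of i] integral_sq_eq_cov_mat[OF assms(1,2)] assms(3) by (auto simp: has_mean_cov_def)
  qed
  then show ?thesis
    unfolding second_moment_def using sum_mono[of UNIV "\<lambda>i. \<integral>y. (y $ i)\<^sup>2 \<partial>P" "\<lambda>_. B + B\<^sup>2"] by simp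
qed

lemma KL_estimate_le:
  fixes n B s v\<^sub>\<mu> v\<^sub>\<nu> m\<^sub>\<mu> m\<^sub>\<nu> :: real
  assumes n: "2 \<le> n" and B: "0 < B" and s: "0 < s" "s \<le> v\<^sub>\<mu>" "s \<le> v\<^sub>\<nu>"
    and v\<^sub>\<nu>: "n * v\<^sub>\<nu> \<le> m\<^sub>\<nu>" and m: "m\<^sub>\<mu> \<le> n * (B + B\<^sup>2)" "m\<^sub>\<nu> \<le> n * (B + B\<^sup>2)"
  shows "n / 2 * ln (v\<^sub>\<nu> / v\<^sub>\<mu>) + (m\<^sub>\<mu> + m\<^sub>\<nu>) / v\<^sub>\<nu> - n \<le> 4 * n\<^sup>2 * (max B 1)\<^sup>2 / s"
proof -
  define A where "A = B + B\<^sup>2"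
  define W where "W = n * A / s"
  define Z where "Z = n * (max B 1)\<^sup>2 / s"
  have "A \<le> 2 * (max B 1)\<^sup>2"
  proof -
    have "B \<le> (max B 1)\<^sup>2"
      using self_le_power[of "max B 1" 2] by simp
    moreover have "B\<^sup>2 \<le> (max B 1)\<^sup>2"
      using B by (intro power_mono) auto
    ultimately show ?thesis unfolding A_def by simp
  qed
  then have "W \<le> 2 * Z"
    using n s unfolding W_def Z_def by (simp add: divide_right_mono)
  have "v\<^sub>\<nu> \<le> A"
    using order_trans[OF v\<^sub>\<nu> m(2)] n unfolding A_def by simp
  have "ln (v\<^sub>\<nu> / v\<^sub>\<mu>) \<le> v\<^sub>\<nu> / v\<^sub>\<mu>"
    using s by (intro less_imp_le[OF ln_less_self]) auto
  also have "\<dots> \<le> A / s"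
    using s \<open>v\<^sub>\<nu> \<le> A\<close> by (intro frac_le) auto
  finally have "n / 2 * ln (v\<^sub>\<nu> / v\<^sub>\<mu>) \<le> n / 2 * (A / s)"
    using n by (intro mult_left_mono) auto
  then have "n / 2 * ln (v\<^sub>\<nu> / v\<^sub>\<mu>) \<le> W / 2"
    by (simp add: W_def)
  moreover have "(m\<^sub>\<mu> + m\<^sub>\<nu>) / v\<^sub>\<nu> \<le> (2 * n * A) / s"
    using s m n B by (intro frac_le) (auto simp: A_def)
  then have "(m\<^sub>\<mu> + m\<^sub>\<nu>) / v\<^sub>\<nu> \<le> 2 * W"
    by (simp add: W_def)
  ultimately have "n / 2 * ln (v\<^sub>\<nu> / v\<^sub>\<mu>) + (m\<^sub>\<mu> + m\<^sub>\<nu>) / v\<^sub>\<nu> - n \<le> 5 * Z"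
    using \<open>W \<le> 2 * Z\<close> n by linarith
  also have "\<dots> \<le> 4 * n\<^sup>2 * (max B 1)\<^sup>2 / s"
  proof -
    have "5 * (max B 1)\<^sup>2 \<le> (4 * n) * (max B 1)\<^sup>2"
      using n by (intro mult_right_mono) auto
    then have "n * (5 * (max B 1)\<^sup>2) / s \<le> n * ((4 * n) * (max B 1)\<^sup>2) / s"
      using n s by (intro divide_right_mono mult_left_mono) auto
    then show ?thesis
      by (simp add: Z_def power2_eq_square algebra_simps)
  qed
  finally show ?thesis .
qed

lemma noisy_sample_smooth_process:
  "smooth_process M fs \<Longrightarrow> 0 < v \<Longrightarrow> noisy_sample M fs v"
  unfolding smooth_process_def by (auto intro: noisy_sample.intro noisy_sample_axioms.intro)

theorem mainTheorem14:
  fixes M :: "'a measure" and fs :: "'a \<Rightarrow> real \<Rightarrow> real" and v\<^sub>\<mu> :: real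
    and N :: "'b measure" and gs :: "'b \<Rightarrow> real \<Rightarrow> real" and v\<^sub>\<nu> :: real
    and Mb \<sigma>2 :: real and x :: "real ^ 'n"
  assumes n2: "CARD('n) \<ge> 2"
    and mu: "smooth_process M fs" "v\<^sub>\<mu> > 0"
    and nu: "smooth_process N gs" "gaussian_process N gs" "v\<^sub>\<nu> > 0"
    and Mpos: "Mb > 0"
    and ex: "\<And>y :: real ^ 'n. has_mean_cov (Px M fs v\<^sub>\<mu> y) \<and> has_mean_cov (Px N gs v\<^sub>\<nu> y)"
    and bnd_mean: "\<And>(y :: real ^ 'n) i. \<bar>mean_vec (Px M fs v\<^sub>\<mu> y) i\<bar> \<le> Mb \<and> \<bar>mean_vec (Px N gs v\<^sub>\<nu> y) i\<bar> \<le> Mb"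
    and bnd_cov: "\<And>(y :: real ^ 'n) i j. \<bar>cov_mat (Px M fs v\<^sub>\<mu> y) i j\<bar> \<le> Mb \<and> \<bar>cov_mat (Px N gs v\<^sub>\<nu> y) i j\<bar> \<le> Mb"
    and sig: "\<sigma>2 > 0" "v\<^sub>\<mu> \<ge> \<sigma>2" "v\<^sub>\<nu> \<ge> \<sigma>2"
  shows "KL (Px M fs v\<^sub>\<mu> x) (Px N gs v\<^sub>\<nu> x) \<le> ereal (4 * (real CARD('n))\<^sup>2 * (max Mb 1)\<^sup>2 / \<sigma>2)"
proof -
  have mu': "noisy_sample M fs v\<^sub>\<mu>" and nu': "noisy_sample N gs v\<^sub>\<nu>"
    using mu nu by (simp_all add: noisy_sample_smooth_process)
  have mom: "has_mean_cov (Px M fs v\<^sub>\<mu> x)" "has_mean_cov (Px N gs v\<^sub>\<nu> x)"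
    using ex by auto
  have "second_moment (Px M fs v\<^sub>\<mu> x) \<le> CARD('n) * (Mb + Mb\<^sup>2)"
    using bnd_mean bnd_cov
    by (intro second_moment_le noisy_sample.prob_space_Px[OF mu'] noisy_sample.sets_Px[OF mu'] mom(1)) auto
  moreover have "second_moment (Px N gs v\<^sub>\<nu> x) \<le> CARD('n) * (Mb + Mb\<^sup>2)"
    using bnd_mean bnd_cov
    by (intro second_moment_le noisy_sample.prob_space_Px[OF nu'] noisy_sample.sets_Px[OF nu'] mom(2)) auto
  moreover have "CARD('n) * v\<^sub>\<nu> \<le> second_moment (Px N gs v\<^sub>\<nu> x)"
    by (rule noisy_sample.noise_le_second_moment[OF nu' mom(2)])
  ultimately have "CARD('n) / 2 * ln (v\<^sub>\<nu> / v\<^sub>\<mu>)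
      + (second_moment (Px M fs v\<^sub>\<mu> x) + second_moment (Px N gs v\<^sub>\<nu> x)) / v\<^sub>\<nu> - CARD('n)
      \<le> 4 * (real CARD('n))\<^sup>2 * (max Mb 1)\<^sup>2 / \<sigma>2"
    using n2 Mpos sig by (intro KL_estimate_le) auto
  then show ?thesis
    using KL_Px_le_second_moment[OF mu' nu' mom] by (simp add: order_trans)
qed

end
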